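(* Let $\phi$ be the Fox function. (1) For every odd $l\ge 1$ and every integer $k>l/2$, $\phi(l,2k)=0$. (2) For every even $l\ge 0$ and every integer $k\ge l/2$, $\phi(l,2k)=\phi(l,2k+1)$. (3) For every even $l\ge 0$ and every integer $k\ge l/2$, $\phi(l+1,2k+1)=-\phi(l,2k+1)$.
   Context: For integers $0\le l\le k$, the Fox function is $\phi(l,k)=\sum_{\mathbf a}(-1)^{w(\mathbf a)+(l-1)}$, where the sum runs over all $l$-element subsets $\mathbf a\subseteq\{1,\dots,k\}$, $\mathbf b=\{1,\dots,k\}\setminus\mathbf a$, and $w(\mathbf a)$ is the number of pairs $(i,j)$ with $i\in\mathbf a$, $j\in\mathbf b$ and $j<i$. *)

theory Defs
  imports Main
begin

definition fox_w :: "nat \<Rightarrow> nat set \<Rightarrow> nat" where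
  "fox_w k a = card {(i, j). i \<in> a \<and> j \<in> {1..k} - a \<and> j < i}"

text \<open>The sign (-1)^(w(a) + (l-1)) is taken with integer exponent;
  since l - 1 and l + 1 have the same parity we write (-1)^(w(a) + l + 1),
  which avoids truncated natural subtraction at l = 0.\<close>
definition fox_phi :: "nat \<Rightarrow> nat \<Rightarrow> int" where
  "fox_phi l k = (\<Sum>a\<in>{a. a \<subseteq> {1..k} \<and> card a = l}. (-1::int) ^ (fox_w k a + l + 1))"

end

theory Submission
  imports Defs
begin

text \<open>Up to the sign \<open>(-1)^(l+1)\<close>, \<open>\<phi>(l,k)\<close> is the inversion generating function of the
  \<open>l\<close>-subsets of \<open>{1..k}\<close>, i.e. the Gaussian binomial coefficient \<open>[k choose l]_q\<close> at \<open>q = -1\<close>.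
  Splitting on whether \<open>k+1\<close> belongs to the subset gives the \<open>q\<close>-Pascal rule
  \<open>G(k+1,l+1) = G(k,l+1) + q^(k-l) G(k,l)\<close>, and at \<open>q = -1\<close> this recurrence is solved by
  \<open>0\<close> if \<open>k\<close> is even and \<open>l\<close> odd, and by \<open>\<lfloor>k/2\<rfloor> choose \<lfloor>l/2\<rfloor>\<close> otherwise.
  All three identities can be read off this closed form.\<close>

definition fox_subsets :: "nat \<Rightarrow> nat \<Rightarrow> nat set set" where
  "fox_subsets k l = {a. a \<subseteq> {1..k} \<and> card a = l}"

definition fox_sign_sum :: "nat \<Rightarrow> nat \<Rightarrow> int" where
  "fox_sign_sum k l = (\<Sum>a\<in>fox_subsets k l. (-1) ^ fox_w k a)"

definition gauss_binomial_at_neg1 :: "nat \<Rightarrow> nat \<Rightarrow> int" where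
  "gauss_binomial_at_neg1 k l = (if even k \<and> odd l then 0 else int (k div 2 choose l div 2))"

lemma finite_fox_subsets: "finite (fox_subsets k l)"
  unfolding fox_subsets_def by (rule finite_subset[of _ "Pow {1..k}"]) auto

lemma card_fox_subsets: "card (fox_subsets k l) = k choose l"
  unfolding fox_subsets_def using n_subsets[of "{1..k}" l] by simp

lemma fox_subsets_0: "fox_subsets k 0 = {{}}"
  unfolding fox_subsets_def by (auto dest: finite_subset)

lemma fox_subsets_empty: "k < l \<Longrightarrow> fox_subsets k l = {}"
  using card_fox_subsets[of k l] finite_fox_subsets[of k l] binomial_eq_0[of k l] by simp

lemma fox_subsets_Suc_Suc:
  "fox_subsets (Suc k) (Suc l) = fox_subsets k (Suc l) \<union> insert (Suc k) ` fox_subsets k l"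
proof (intro equalityI subsetI)
  fix a assume "a \<in> fox_subsets (Suc k) (Suc l)"
  then have sub: "a \<subseteq> {1..Suc k}" and card: "card a = Suc l"
    unfolding fox_subsets_def by auto
  have "finite a" using sub finite_subset by blast
  show "a \<in> fox_subsets k (Suc l) \<union> insert (Suc k) ` fox_subsets k l"
  proof (cases "Suc k \<in> a")
    case True
    then have "a - {Suc k} \<in> fox_subsets k l" "a = insert (Suc k) (a - {Suc k})"
      using sub card \<open>finite a\<close> unfolding fox_subsets_def by auto
    then show ?thesis by blast
  next
    case False
    then have "a \<subseteq> {1..k}" using sub by (auto simp: le_Suc_eq)
    then show ?thesis using card unfolding fox_subsets_def by auto
  qed
next
  fix a assume "a \<in> fox_subsets k (Suc l) \<union> insert (Suc k) ` fox_subsets k l"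
  moreover have "card (insert (Suc k) b) = Suc (card b)" if "b \<subseteq> {1..k}" for b
    using that by (subst card_insert_disjoint) (auto dest: finite_subset)
  ultimately show "a \<in> fox_subsets (Suc k) (Suc l)"
    unfolding fox_subsets_def by auto
qed

lemma fox_w_Suc:
  assumes "a \<subseteq> {1..k}" shows "fox_w (Suc k) a = fox_w k a"
proof -
  have "{(i, j). i \<in> a \<and> j \<in> {1..Suc k} - a \<and> j < i}
      = {(i, j). i \<in> a \<and> j \<in> {1..k} - a \<and> j < i}"
    using assms by fastforce
  then show ?thesis unfolding fox_w_def by simp
qed

lemma fox_w_Suc_insert:
  assumes "a \<subseteq> {1..k}" shows "fox_w (Suc k) (insert (Suc k) a) = fox_w k a + (k - card a)"
proof -
  have "finite a" using assms finite_subset by blast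
  let ?old = "{(i, j). i \<in> a \<and> j \<in> {1..k} - a \<and> j < i}"
  let ?new = "Pair (Suc k) ` ({1..k} - a)"
  have split: "{(i, j). i \<in> insert (Suc k) a \<and> j \<in> {1..Suc k} - insert (Suc k) a \<and> j < i}
      = ?old \<union> ?new"
    using assms by auto
  have "finite ?old" by (rule finite_subset[of _ "a \<times> {1..k}"]) (use \<open>finite a\<close> in auto)
  moreover have "?old \<inter> ?new = {}" using assms by auto
  moreover have "card ?new = k - card a"
    using card_Diff_subset[OF \<open>finite a\<close> assms] by (simp add: card_image inj_on_def)
  ultimately show ?thesis unfolding fox_w_def split by (simp add: card_Un_disjoint)
qed

lemma fox_sign_sum_0: "fox_sign_sum k 0 = 1"
  by (simp add: fox_sign_sum_def fox_subsets_0 fox_w_def)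

lemma fox_sign_sum_eq_0: "k < l \<Longrightarrow> fox_sign_sum k l = 0"
  by (simp add: fox_sign_sum_def fox_subsets_empty)

lemma fox_sign_sum_Suc_Suc:
  "fox_sign_sum (Suc k) (Suc l) = fox_sign_sum k (Suc l) + (-1) ^ (k - l) * fox_sign_sum k l"
proof -
  have disj: "fox_subsets k (Suc l) \<inter> insert (Suc k) ` fox_subsets k l = {}"
    unfolding fox_subsets_def by auto
  have inj: "inj_on (insert (Suc k)) (fox_subsets k l)"
    unfolding fox_subsets_def by (intro inj_onI) (metis Suc_n_not_le_n atLeastAtMost_iff
      insert_ident mem_Collect_eq subsetD)
  have "fox_sign_sum (Suc k) (Suc l)
      = (\<Sum>a\<in>fox_subsets k (Suc l). (-1) ^ fox_w (Suc k) a)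
        + (\<Sum>a\<in>insert (Suc k) ` fox_subsets k l. (-1) ^ fox_w (Suc k) a)"
    unfolding fox_sign_sum_def fox_subsets_Suc_Suc
    by (rule sum.union_disjoint) (auto simp: finite_fox_subsets disj)
  also have "(\<Sum>a\<in>fox_subsets k (Suc l). (-1) ^ fox_w (Suc k) a) = fox_sign_sum k (Suc l)"
    unfolding fox_sign_sum_def by (rule sum.cong) (auto simp: fox_subsets_def fox_w_Suc)
  also have "(\<Sum>a\<in>insert (Suc k) ` fox_subsets k l. (-1::int) ^ fox_w (Suc k) a)
      = (\<Sum>a\<in>fox_subsets k l. (-1) ^ (k - l) * (-1) ^ fox_w k a)"
    by (simp add: sum.reindex[OF inj]) (auto intro!: sum.cong
        simp: fox_subsets_def fox_w_Suc_insert power_add mult.commute)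
  also have "\<dots> = (-1) ^ (k - l) * fox_sign_sum k l"
    by (simp add: fox_sign_sum_def sum_distrib_left)
  finally show ?thesis .
qed

lemma gauss_binomial_at_neg1_eq_0: "k < l \<Longrightarrow> gauss_binomial_at_neg1 k l = 0"
  unfolding gauss_binomial_at_neg1_def by (cases "even k \<and> odd l") (auto, presburger)

lemma gauss_binomial_at_neg1_Suc_Suc:
  assumes "l \<le> k"
  shows "gauss_binomial_at_neg1 (Suc k) (Suc l)
       = gauss_binomial_at_neg1 k (Suc l) + (-1) ^ (k - l) * gauss_binomial_at_neg1 k l"
proof -
  have parity: "even (k - l) \<longleftrightarrow> (even k \<longleftrightarrow> even l)" using assms by presburger
  consider "even k" "even l" | "even k" "odd l" | "odd k" "even l" | "odd k" "odd l" by blast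
  then show ?thesis
  proof cases
    case 1
    then have "Suc k div 2 = k div 2" "Suc l div 2 = l div 2" by presburger+
    with 1 parity show ?thesis unfolding gauss_binomial_at_neg1_def by simp
  next
    case 2
    then have "Suc k div 2 = k div 2" by presburger
    with 2 parity show ?thesis unfolding gauss_binomial_at_neg1_def by simp
  next
    case 3
    then have "Suc l div 2 = l div 2" by presburger
    with 3 parity show ?thesis unfolding gauss_binomial_at_neg1_def by simp
  next
    case 4
    then have "Suc k div 2 = Suc (k div 2)" "Suc l div 2 = Suc (l div 2)" by presburger+
    with 4 parity show ?thesis unfolding gauss_binomial_at_neg1_def by simp
  qed
qed

lemma fox_sign_sum_eq_gauss_binomial_at_neg1:
  "fox_sign_sum k l = gauss_binomial_at_neg1 k l"
proof (induction k arbitrary: l)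
  case 0
  then show ?case
    by (cases l) (auto simp: fox_sign_sum_0 fox_sign_sum_eq_0 gauss_binomial_at_neg1_def)
next
  case (Suc k)
  show ?case
  proof (cases l)
    case 0
    then show ?thesis by (simp add: fox_sign_sum_0 gauss_binomial_at_neg1_def)
  next
    case (Suc l')
    then show ?thesis
      by (cases "l' \<le> k") (simp_all add: fox_sign_sum_Suc_Suc gauss_binomial_at_neg1_Suc_Suc
          Suc.IH fox_sign_sum_eq_0 gauss_binomial_at_neg1_eq_0)
  qed
qed

lemma fox_phi_eq_gauss_binomial_at_neg1:
  "fox_phi l k = (-1) ^ (l + 1) * gauss_binomial_at_neg1 k l"
  unfolding fox_sign_sum_eq_gauss_binomial_at_neg1[symmetric] fox_phi_def fox_sign_sum_def fox_subsets_def
  by (simp add: power_add sum_distrib_left mult.commute)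

theorem proposition2p3:
  shows "(\<forall>l k::nat. odd l \<and> l \<ge> 1 \<and> 2 * k > l \<longrightarrow> fox_phi l (2 * k) = 0)
       \<and> (\<forall>l k::nat. even l \<and> 2 * k \<ge> l \<longrightarrow> fox_phi l (2 * k) = fox_phi l (2 * k + 1))
       \<and> (\<forall>l k::nat. even l \<and> 2 * k \<ge> l \<longrightarrow> fox_phi (l + 1) (2 * k + 1) = - fox_phi l (2 * k + 1))"
  by (auto simp: fox_phi_eq_gauss_binomial_at_neg1 gauss_binomial_at_neg1_def)

end
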